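(* Let $(X,\mathcal E,\Psi,\mathfrak F,\mathfrak P)$ be a generalized gradient system (as described in the context) which satisfies the chain-rule inequality (CRI). Then every EDI solution $P\in \mathrm{AC}([0,T];X)$ of $(X,\mathcal E,\Psi,\mathfrak F,\mathfrak P)$ is an EDB solution of $(X,\mathcal E,\Psi,\mathfrak F,\mathfrak P)$.
   Context: Setting: $X$ is a separable reflexive Banach space with dual $X^*$ and duality pairing $\langle\cdot,\cdot\rangle$; $T>0$. $\mathcal E:[0,T]\times X\to(-\infty,\infty]$ is bounded from below and lower semicontinuous, and $\{P:\mathcal E(t,P)<\infty\}=\mathrm D$ for all $t\in[0,T]$, for a fixed set $\mathrm D\subset X$. $\Psi=(\Psi_P)_{P\in\mathrm D}$ is a family of non-negative convex functionals $\Psi_P:X\to[0,\infty)$ such that $\Psi_P$ and its Fenchel conjugate $\Psi_P^*(\Xi)=\sup_{V\in X}(\langle\Xi,V\rangle-\Psi_P(V))$ have superlinear growth at infinity; $\partial\Psi_P$ denotes the convex subdifferential. $\mathfrak F:[0,T]\times\mathrm D\rightrightarrows X^*$ is a multivalued map and $\mathfrak P:\mathrm{graph}(\mathfrak F)\to\mathbb R$ is a Borel map. EDI solution: $P\in\mathrm{AC}([0,T];X)$ such that there exist $\mathscr E\in \mathrm{BV}([0,T])$ with $\mathscr E(t)\ge\mathcal E(t,P(t))$ for all $t\in[0,T]$ and $\mathscr E(s)=\mathcal E(s,P(s))$ for a.a. $s\in(0,T)$ and for $s=0$, and $\Xi\in L^1(0,T;X^* )$ with $\Xi(t)\in\mathfrak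 F(t,P(t))$ for a.a. $t$, such that for all $0\le s\le t\le T$: $\mathscr E(t)+\int_s^t\big(\Psi_{P(r)}(\dot P(r))+\Psi^*_{P(r)}(-\Xi(r))\big)dr\le \mathscr E(s)+\int_s^t\mathfrak P(r,P(r),\Xi(r))\,dr$. EDB solution: $P\in\mathrm{AC}([0,T];X)$ such that there exists $\Xi\in L^1(0,T;X^* )$ with $\Xi(t)\in\mathfrak F(t,P(t))$ and $0\in\partial\Psi_{P(t)}(\dot P(t))+\Xi(t)$ for a.a. $t\in(0,T)$, and for all $0\le s\le t\le T$: $\mathcal E(t,P(t))+\int_s^t\big(\Psi_{P(r)}(\dot P(r))+\Psi^*_{P(r)}(-\Xi(r))\big)dr= \mathcal E(s,P(s))+\int_s^t\mathfrak P(r,P(r),\Xi(r))\,dr$. Chain-rule inequality (CRI): for every $P\in\mathrm{AC}([0,T];X)$ and $\Xi\in L^1(0,T;X^* )$ with $\sup_{t\in(0,T)}|\mathcal E(t,P(t))|<\infty$, $\Xi(t)\in\mathfrak F(t,P(t))$ for a.a. $t$, $\int_0^T\Psi_{P(t)}(\dot P(t))dt<\infty$ and $\int_0^T\Psi^*_{P(t)}(-\Xi(t))dt<\infty$, the map $t\mapsto\mathcal E(t,P(t))$ is absolutely continuous and $\frac{d}{dt}\mathcal E(t,P(t))\ge\langle\Xi(t),\dot P(t)\rangle+\mathfrak P(t,P(t),\Xi(t))$ for a.a. $t\in(0,T)$. *)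

theory Defs
  imports "HOL-Analysis.Analysis"
begin

definition ac_on :: "real \<Rightarrow> real \<Rightarrow> (real \<Rightarrow> 'a::real_normed_vector) \<Rightarrow> bool" where
  "ac_on a b f \<longleftrightarrow>
     (\<forall>\<epsilon>>0. \<exists>\<delta>>0. \<forall>(n::nat) (I::nat \<Rightarrow> real \<times> real).
        (\<forall>i<n. a \<le> fst (I i) \<and> fst (I i) \<le> snd (I i) \<and> snd (I i) \<le> b)
        \<and> (\<forall>i<n. \<forall>j<n. i \<noteq> j \<longrightarrow>
              {fst (I i)<..<snd (I i)} \<inter> {fst (I j)<..<snd (I j)} = {})
        \<and> (\<Sum>i<n. snd (I i) - fst (I i)) < \<delta>
        \<longrightarrow> (\<Sum>i<n. norm (f (snd (I i)) - f (fst (I i)))) < \<epsilon>)"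

definition bv_on :: "real \<Rightarrow> real \<Rightarrow> (real \<Rightarrow> real) \<Rightarrow> bool" where
  "bv_on a b f \<longleftrightarrow>
     (\<exists>C. \<forall>(n::nat) (t::nat \<Rightarrow> real).
        (\<forall>i\<le>n. a \<le> t i \<and> t i \<le> b) \<and> (\<forall>i<n. t i \<le> t (Suc i))
        \<longrightarrow> (\<Sum>i<n. \<bar>f (t (Suc i)) - f (t i)\<bar>) \<le> C)"

text \<open>The dual space X* is modelled by a type 'd together with an isometric
  linear bijection dual onto the bounded linear functionals on 'x;
  the pairing is \<langle>\<xi>,v\<rangle> = blinfun_apply (dual \<xi>) v.\<close>
definition dual_pairing :: "('d::real_normed_vector \<Rightarrow> ('x::real_normed_vector \<Rightarrow>\<^sub>L real)) \<Rightarrow> bool" where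
  "dual_pairing dual \<longleftrightarrow> bounded_linear dual \<and> (\<forall>\<xi>. norm (dual \<xi>) = norm \<xi>) \<and> surj dual"

definition reflexive_pairing :: "('d::real_normed_vector \<Rightarrow> ('x::real_normed_vector \<Rightarrow>\<^sub>L real)) \<Rightarrow> bool" where
  "reflexive_pairing dual \<longleftrightarrow>
     (\<forall>\<phi> :: 'd \<Rightarrow>\<^sub>L real. \<exists>x. \<forall>\<xi>. blinfun_apply \<phi> \<xi> = blinfun_apply (dual \<xi>) x)"

definition fconj :: "('d \<Rightarrow> ('x::real_normed_vector \<Rightarrow>\<^sub>L real)) \<Rightarrow> ('x \<Rightarrow> real) \<Rightarrow> 'd \<Rightarrow> real" where
  "fconj dual \<psi> \<xi> = (SUP v. blinfun_apply (dual \<xi>) v - \<psi> v)"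

definition subdiff :: "('d \<Rightarrow> ('x::real_normed_vector \<Rightarrow>\<^sub>L real)) \<Rightarrow> ('x \<Rightarrow> real) \<Rightarrow> 'x \<Rightarrow> 'd set" where
  "subdiff dual \<psi> v = {\<xi>. \<forall>w. \<psi> w \<ge> \<psi> v + blinfun_apply (dual \<xi>) (w - v)}"

definition superlinear :: "('a::real_normed_vector \<Rightarrow> real) \<Rightarrow> bool" where
  "superlinear f \<longleftrightarrow> (\<forall>M. \<exists>R. \<forall>v. norm v \<ge> R \<longrightarrow> f v \<ge> M * norm v)"

definition lsc_energy :: "real \<Rightarrow> (real \<Rightarrow> 'x::real_normed_vector \<Rightarrow> ereal) \<Rightarrow> bool" where
  "lsc_energy T E \<longleftrightarrow>
     (\<forall>t x (ts::nat \<Rightarrow> real) xs. t \<in> {0..T} \<and> (\<forall>n. ts n \<in> {0..T}) \<and>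
        ts \<longlonglongrightarrow> t \<and> xs \<longlonglongrightarrow> x \<longrightarrow> E t x \<le> liminf (\<lambda>n. E (ts n) (xs n)))"

definition graphF :: "real \<Rightarrow> 'x set \<Rightarrow> (real \<Rightarrow> 'x \<Rightarrow> 'd set) \<Rightarrow> (real \<times> 'x \<times> 'd) set" where
  "graphF T D F = {(t, x, \<xi>). t \<in> {0..T} \<and> x \<in> D \<and> \<xi> \<in> F t x}"

definition gen_gradient_system ::
  "real \<Rightarrow> ('d::{banach,second_countable_topology} \<Rightarrow> ('x::{banach,second_countable_topology} \<Rightarrow>\<^sub>L real))
   \<Rightarrow> 'x set \<Rightarrow> (real \<Rightarrow> 'x \<Rightarrow> ereal) \<Rightarrow> ('x \<Rightarrow> 'x \<Rightarrow> real)
   \<Rightarrow> (real \<Rightarrow> 'x \<Rightarrow> 'd set) \<Rightarrow> (real \<Rightarrow> 'x \<Rightarrow> 'd \<Rightarrow> real) \<Rightarrow> bool" where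
  "gen_gradient_system T dual D E Psi F Pw \<longleftrightarrow>
     T > 0 \<and> dual_pairing dual \<and> reflexive_pairing dual
     \<and> (\<exists>c. \<forall>t\<in>{0..T}. \<forall>x. E t x \<ge> ereal c)
     \<and> lsc_energy T E
     \<and> (\<forall>t\<in>{0..T}. {x. E t x < \<infinity>} = D)
     \<and> (\<forall>P\<in>D. convex_on UNIV (Psi P) \<and> (\<forall>v. Psi P v \<ge> 0)
              \<and> superlinear (Psi P) \<and> superlinear (fconj dual (Psi P)))
     \<and> (\<lambda>(t, x, \<xi>). Pw t x \<xi>) \<in> borel_measurable (restrict_space borel (graphF T D F))"

definition is_deriv_ae :: "real \<Rightarrow> (real \<Rightarrow> 'x::real_normed_vector) \<Rightarrow> (real \<Rightarrow> 'x) \<Rightarrow> bool" where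
  "is_deriv_ae T P Pd \<longleftrightarrow> (AE t in lborel. t \<in> {0<..<T} \<longrightarrow> (P has_vector_derivative Pd t) (at t))"

definition chain_rule_ineq ::
  "real \<Rightarrow> ('d::{banach,second_countable_topology} \<Rightarrow> ('x::{banach,second_countable_topology} \<Rightarrow>\<^sub>L real))
   \<Rightarrow> (real \<Rightarrow> 'x \<Rightarrow> ereal) \<Rightarrow> ('x \<Rightarrow> 'x \<Rightarrow> real)
   \<Rightarrow> (real \<Rightarrow> 'x \<Rightarrow> 'd set) \<Rightarrow> (real \<Rightarrow> 'x \<Rightarrow> 'd \<Rightarrow> real) \<Rightarrow> bool" where
  "chain_rule_ineq T dual E Psi F Pw \<longleftrightarrow>
     (\<forall>P Pd Xi. ac_on 0 T P \<and> is_deriv_ae T P Pd \<and> set_integrable lborel {0..T} Xi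
        \<and> (\<exists>C. \<forall>t\<in>{0<..<T}. \<bar>E t (P t)\<bar> \<le> ereal C)
        \<and> (AE t in lborel. t \<in> {0<..<T} \<longrightarrow> Xi t \<in> F t (P t))
        \<and> set_integrable lborel {0..T} (\<lambda>t. Psi (P t) (Pd t))
        \<and> set_integrable lborel {0..T} (\<lambda>t. fconj dual (Psi (P t)) (- Xi t))
        \<longrightarrow> (\<forall>t\<in>{0..T}. \<bar>E t (P t)\<bar> \<noteq> \<infinity>)
          \<and> ac_on 0 T (\<lambda>t. real_of_ereal (E t (P t)))
          \<and> (AE t in lborel. t \<in> {0<..<T} \<longrightarrow>
               (\<exists>D. ((\<lambda>s. real_of_ereal (E s (P s))) has_real_derivative D) (at t)
                    \<and> D \<ge> blinfun_apply (dual (Xi t)) (Pd t) + Pw t (P t) (Xi t))))"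

definition EDI_solution ::
  "real \<Rightarrow> ('d::{banach,second_countable_topology} \<Rightarrow> ('x::{banach,second_countable_topology} \<Rightarrow>\<^sub>L real))
   \<Rightarrow> (real \<Rightarrow> 'x \<Rightarrow> ereal) \<Rightarrow> ('x \<Rightarrow> 'x \<Rightarrow> real)
   \<Rightarrow> (real \<Rightarrow> 'x \<Rightarrow> 'd set) \<Rightarrow> (real \<Rightarrow> 'x \<Rightarrow> 'd \<Rightarrow> real) \<Rightarrow> (real \<Rightarrow> 'x) \<Rightarrow> bool" where
  "EDI_solution T dual E Psi F Pw P \<longleftrightarrow>
     ac_on 0 T P \<and>
     (\<exists>Pd Es Xi. is_deriv_ae T P Pd \<and> bv_on 0 T Es
        \<and> (\<forall>t\<in>{0..T}. ereal (Es t) \<ge> E t (P t))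
        \<and> (AE s in lborel. s \<in> {0<..<T} \<longrightarrow> ereal (Es s) = E s (P s))
        \<and> ereal (Es 0) = E 0 (P 0)
        \<and> set_integrable lborel {0..T} Xi
        \<and> (AE t in lborel. t \<in> {0<..<T} \<longrightarrow> Xi t \<in> F t (P t))
        \<and> set_integrable lborel {0..T} (\<lambda>r. Psi (P r) (Pd r))
        \<and> set_integrable lborel {0..T} (\<lambda>r. fconj dual (Psi (P r)) (- Xi r))
        \<and> set_integrable lborel {0..T} (\<lambda>r. Pw r (P r) (Xi r))
        \<and> (\<forall>s t. 0 \<le> s \<and> s \<le> t \<and> t \<le> T \<longrightarrow>
             Es t + (LINT r:{s..t}|lborel. Psi (P r) (Pd r) + fconj dual (Psi (P r)) (- Xi r))
             \<le> Es s + (LINT r:{s..t}|lborel. Pw r (P r) (Xi r))))"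

definition EDB_solution ::
  "real \<Rightarrow> ('d::{banach,second_countable_topology} \<Rightarrow> ('x::{banach,second_countable_topology} \<Rightarrow>\<^sub>L real))
   \<Rightarrow> (real \<Rightarrow> 'x \<Rightarrow> ereal) \<Rightarrow> ('x \<Rightarrow> 'x \<Rightarrow> real)
   \<Rightarrow> (real \<Rightarrow> 'x \<Rightarrow> 'd set) \<Rightarrow> (real \<Rightarrow> 'x \<Rightarrow> 'd \<Rightarrow> real) \<Rightarrow> (real \<Rightarrow> 'x) \<Rightarrow> bool" where
  "EDB_solution T dual E Psi F Pw P \<longleftrightarrow>
     ac_on 0 T P \<and>
     (\<exists>Pd Xi. is_deriv_ae T P Pd
        \<and> set_integrable lborel {0..T} Xi
        \<and> (AE t in lborel. t \<in> {0<..<T} \<longrightarrow>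
              Xi t \<in> F t (P t) \<and> 0 \<in> (\<lambda>\<eta>. \<eta> + Xi t) ` subdiff dual (Psi (P t)) (Pd t))
        \<and> set_integrable lborel {0..T} (\<lambda>r. Psi (P r) (Pd r))
        \<and> set_integrable lborel {0..T} (\<lambda>r. fconj dual (Psi (P r)) (- Xi r))
        \<and> set_integrable lborel {0..T} (\<lambda>r. Pw r (P r) (Xi r))
        \<and> (\<forall>s t. 0 \<le> s \<and> s \<le> t \<and> t \<le> T \<longrightarrow>
             E t (P t) + ereal (LINT r:{s..t}|lborel. Psi (P r) (Pd r) + fconj dual (Psi (P r)) (- Xi r))
             = E s (P s) + ereal (LINT r:{s..t}|lborel. Pw r (P r) (Xi r))))"

end

theory Submission
  imports Defs
begin

text \<open>Let e(t) = E(t, P(t)) be the energy along an EDI solution. The chain rule, combined with the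
  Fenchel--Young inequality Psi(P') + Psi*(-Xi) \<ge> <-Xi, P'>, bounds e' from below by the net power
  Pw - Psi(P') - Psi*(-Xi) plus the nonnegative Fenchel gap; integrating gives
  e(t) - e(s) \<ge> \<integral> (Pw - Psi - Psi*) over [s, t]. The EDI from s = 0 gives the reverse inequality on
  every [0, t], because the upper energy dominates e and agrees with it at 0. Hence the energy identity
  holds on every [s, t], and the Fenchel gap integrates to zero, so it vanishes almost everywhere; a
  vanishing gap means exactly -Xi \<in> \<partial>Psi(P').\<close>

hide_const (open) Polynomial.content

section \<open>Gauge estimates for absolutely continuous functions\<close>

lemma tagged_division_of_real_interval:
  assumes "p tagged_division_of {a..b::real}" "(x, K) \<in> p"
  obtains u v where "K = {u..v}" "a \<le> u" "u \<le> x" "x \<le> v" "v \<le> b"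
proof -
  obtain u v where "K = cbox u v" "x \<in> K" "K \<subseteq> {a..b}"
    using tagged_division_ofD(2,3,4)[OF assms] by blast
  then show thesis by (intro that[of u v]) auto
qed

lemma sum_tags_off_null:
  assumes "finite p" "\<And>x K. (x, K) \<in> p \<Longrightarrow> x \<in> N \<Longrightarrow> g (x, K) = 0"
  shows "sum g p = sum g (p - N \<times> UNIV)"
  using assms by (intro sum.mono_neutral_right) auto

lemma negligible_tagged_division_small:
  assumes "negligible N" "0 < \<eta>"
  obtains \<gamma> where "gauge \<gamma>"
    "\<And>p. p tagged_division_of {a..b::real} \<Longrightarrow> \<gamma> fine p \<Longrightarrow> (\<Sum>(x,K)\<in>p \<inter> N \<times> UNIV. content K) < \<eta>"
proof -
  have "(indicator N has_integral (0::real)) {a..b}"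
    using assms(1) unfolding negligible_def by (metis box_real(2))
  from this[unfolded has_integral_real, rule_format, OF assms(2)]
  obtain \<gamma> where "gauge \<gamma>" and \<gamma>: "\<forall>p. p tagged_division_of {a..b} \<and> \<gamma> fine p \<longrightarrow>
      norm ((\<Sum>(x,K)\<in>p. content K *\<^sub>R (indicator N x :: real)) - 0) < \<eta>"
    by blast
  show thesis
  proof (rule that[OF \<open>gauge \<gamma>\<close>])
    fix p assume p: "p tagged_division_of {a..b}" "\<gamma> fine p"
    then have "finite p" by blast
    have "norm ((\<Sum>(x,K)\<in>p. content K *\<^sub>R (indicator N x :: real)) - 0) < \<eta>" using \<gamma> p by blast
    from \<open>finite p\<close> have "(\<Sum>(x,K)\<in>p \<inter> N \<times> UNIV. content K) = (\<Sum>(x,K)\<in>p. content K *\<^sub>R (indicator N x :: real))"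
      by (subst sum.inter_restrict) (auto intro!: sum.cong simp: indicator_def)
    moreover have "(\<Sum>(x,K)\<in>p. content K *\<^sub>R (indicator N x :: real)) \<ge> (0::real)"
      by (intro sum_nonneg) (auto simp: indicator_def)
    ultimately show "(\<Sum>(x,K)\<in>p \<inter> N \<times> UNIV. content K) < \<eta>" using \<open>norm _ < \<eta>\<close> by simp
  qed
qed

lemma has_integral_riemann_sum_off_negligible:
  fixes G :: "real \<Rightarrow> real"
  assumes "(G has_integral I) {a..b}" "negligible N" "0 < e"
  obtains \<gamma> where "gauge \<gamma>"
    "\<And>p. p tagged_division_of {a..b} \<Longrightarrow> \<gamma> fine p \<Longrightarrow> \<bar>(\<Sum>(x,K)\<in>p - N \<times> UNIV. content K * G x) - I\<bar> < e"
proof -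
  define G' where "G' x = (if x \<in> N then 0 else G x)" for x
  have "(G' has_integral I) {a..b}"
    by (rule has_integral_spike[OF assms(2) _ assms(1)]) (simp add: G'_def)
  from this[unfolded has_integral_real, rule_format, OF \<open>0 < e\<close>]
  obtain \<gamma> where "gauge \<gamma>" and \<gamma>: "\<forall>p. p tagged_division_of {a..b} \<and> \<gamma> fine p \<longrightarrow>
      norm ((\<Sum>(x,K)\<in>p. content K *\<^sub>R G' x) - I) < e"
    by blast
  have sum_eq: "(\<Sum>(x,K)\<in>p. content K *\<^sub>R G' x) = (\<Sum>(x,K)\<in>p - N \<times> UNIV. content K * G x)"
    if "finite p" for p
    by (subst sum_tags_off_null[OF that]) (auto simp: G'_def split: if_splits intro!: sum.cong)
  show thesis
  proof (rule that[OF \<open>gauge \<gamma>\<close>])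
    fix p assume p: "p tagged_division_of {a..b}" "\<gamma> fine p"
    then have "finite p" by blast
    with \<gamma> p show "\<bar>(\<Sum>(x,K)\<in>p - N \<times> UNIV. content K * G x) - I\<bar> < e"
      by (metis real_norm_def sum_eq)
  qed
qed

lemma ac_on_subinterval:
  assumes "ac_on a b f" "a \<le> s" "t \<le> b"
  shows "ac_on s t f"
  unfolding ac_on_def
proof (intro allI impI)
  fix e :: real assume "0 < e"
  with assms(1) obtain \<delta> where "0 < \<delta>" and \<delta>: "\<forall>(n::nat) (I::nat \<Rightarrow> real \<times> real).
      (\<forall>i<n. a \<le> fst (I i) \<and> fst (I i) \<le> snd (I i) \<and> snd (I i) \<le> b)
      \<and> (\<forall>i<n. \<forall>j<n. i \<noteq> j \<longrightarrow> {fst (I i)<..<snd (I i)} \<inter> {fst (I j)<..<snd (I j)} = {})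
      \<and> (\<Sum>i<n. snd (I i) - fst (I i)) < \<delta>
      \<longrightarrow> (\<Sum>i<n. norm (f (snd (I i)) - f (fst (I i)))) < e"
    unfolding ac_on_def by blast
  have "(\<Sum>i<n. norm (f (snd (I i)) - f (fst (I i)))) < e"
    if "\<forall>i<n. s \<le> fst (I i) \<and> fst (I i) \<le> snd (I i) \<and> snd (I i) \<le> t"
      and "\<forall>i<n. \<forall>j<n. i \<noteq> j \<longrightarrow> {fst (I i)<..<snd (I i)} \<inter> {fst (I j)<..<snd (I j)} = {}"
      and "(\<Sum>i<n. snd (I i) - fst (I i)) < \<delta>"
    for n :: nat and I :: "nat \<Rightarrow> real \<times> real"
  proof -
    have "\<forall>i<n. a \<le> fst (I i) \<and> fst (I i) \<le> snd (I i) \<and> snd (I i) \<le> b"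
      using that(1) assms(2,3) by force
    then show ?thesis using \<delta> that(2,3) by blast
  qed
  then show "\<exists>\<delta>>0. \<forall>(n::nat) (I::nat \<Rightarrow> real \<times> real).
      (\<forall>i<n. s \<le> fst (I i) \<and> fst (I i) \<le> snd (I i) \<and> snd (I i) \<le> t)
      \<and> (\<forall>i<n. \<forall>j<n. i \<noteq> j \<longrightarrow> {fst (I i)<..<snd (I i)} \<inter> {fst (I j)<..<snd (I j)} = {})
      \<and> (\<Sum>i<n. snd (I i) - fst (I i)) < \<delta>
      \<longrightarrow> (\<Sum>i<n. norm (f (snd (I i)) - f (fst (I i)))) < e"
    using \<open>0 < \<delta>\<close> by blast
qed

lemma ac_on_tagged_division:
  fixes f :: "real \<Rightarrow> 'a::real_normed_vector"
  assumes "ac_on a b f" "0 < e"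
  obtains \<eta> where "0 < \<eta>"
    "\<And>p q. p tagged_division_of {a..b} \<Longrightarrow> q \<subseteq> p \<Longrightarrow> (\<Sum>(x,K)\<in>q. content K) < \<eta>
       \<Longrightarrow> (\<Sum>(x,K)\<in>q. norm (f (Sup K) - f (Inf K))) < e"
proof -
  obtain \<delta> where "0 < \<delta>" and \<delta>: "\<forall>(n::nat) (I::nat \<Rightarrow> real \<times> real). (\<forall>i<n. a \<le> fst (I i) \<and> fst (I i) \<le> snd (I i) \<and> snd (I i) \<le> b)
      \<and> (\<forall>i<n. \<forall>j<n. i \<noteq> j \<longrightarrow> {fst (I i)<..<snd (I i)} \<inter> {fst (I j)<..<snd (I j)} = {})
      \<and> (\<Sum>i<n. snd (I i) - fst (I i)) < \<delta>
      \<longrightarrow> (\<Sum>i<n. norm (f (snd (I i)) - f (fst (I i)))) < e"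
    using assms unfolding ac_on_def by blast
  show thesis
  proof (rule that[OF \<open>0 < \<delta>\<close>])
    fix p q assume p: "p tagged_division_of {a..b}" and "q \<subseteq> p" and small: "(\<Sum>(x,K)\<in>q. content K) < \<delta>"
    have "finite q" using p \<open>q \<subseteq> p\<close> finite_subset by blast
    then obtain h where h: "bij_betw h {..<card q} q"
      using ex_bij_betw_nat_finite by (auto simp: atLeast0LessThan)
    define I where "I i = (Inf (snd (h i)), Sup (snd (h i)))" for i
    have hp: "h i \<in> p" if "i < card q" for i
      using h that \<open>q \<subseteq> p\<close> unfolding bij_betw_def by auto
    have interval: "\<exists>u v. snd (h i) = {u..v} \<and> a \<le> u \<and> u \<le> v \<and> v \<le> b" if "i < card q" for i
      using tagged_division_of_real_interval[OF p, of "fst (h i)" "snd (h i)"] hp[OF that]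
      by (metis order.trans prod.collapse)
    have sum_I: "(\<Sum>i<card q. g (h i)) = (\<Sum>xK\<in>q. g xK)" for g :: "real \<times> real set \<Rightarrow> real"
      using sum.reindex_bij_betw[OF h] by simp
    have "(\<Sum>i<card q. norm (f (snd (I i)) - f (fst (I i)))) < e"
    proof (rule \<delta>[rule_format, of "card q" I], intro conjI)
      show "\<forall>i<card q. a \<le> fst (I i) \<and> fst (I i) \<le> snd (I i) \<and> snd (I i) \<le> b"
        using interval unfolding I_def by fastforce
      show "\<forall>i<card q. \<forall>j<card q. i \<noteq> j \<longrightarrow> {fst (I i)<..<snd (I i)} \<inter> {fst (I j)<..<snd (I j)} = {}"
      proof (intro allI impI)
        fix i j assume ij: "i < card q" "j < card q" "i \<noteq> j"
        then have "h i \<noteq> h j" using h unfolding bij_betw_def inj_on_def by auto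
        then have "interior (snd (h i)) \<inter> interior (snd (h j)) = {}"
          using tagged_division_ofD(5)[OF p] hp ij by (metis prod.collapse)
        then show "{fst (I i)<..<snd (I i)} \<inter> {fst (I j)<..<snd (I j)} = {}"
          using interval[OF ij(1)] interval[OF ij(2)] unfolding I_def by auto
      qed
      have "(\<Sum>i<card q. snd (I i) - fst (I i)) = (\<Sum>i<card q. content (snd (h i)))"
        using interval unfolding I_def by (intro sum.cong) fastforce+
      then show "(\<Sum>i<card q. snd (I i) - fst (I i)) < \<delta>"
        using small sum_I[of "\<lambda>(x,K). content K"] by (simp add: case_prod_beta)
    qed
    then show "(\<Sum>(x,K)\<in>q. norm (f (Sup K) - f (Inf K))) < e"
      unfolding I_def sum_I[of "\<lambda>(x,K). norm (f (Sup K) - f (Inf K))", symmetric]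
      by (simp add: case_prod_beta)
  qed
qed

lemma ac_on_negligible_tags_small:
  fixes f :: "real \<Rightarrow> 'a::real_normed_vector"
  assumes "ac_on a b f" "negligible N" "0 < e"
  obtains \<gamma> where "gauge \<gamma>"
    "\<And>p. p tagged_division_of {a..b} \<Longrightarrow> \<gamma> fine p \<Longrightarrow>
       (\<Sum>(x,K)\<in>p \<inter> N \<times> UNIV. norm (f (Sup K) - f (Inf K))) < e"
proof -
  obtain \<eta> where "0 < \<eta>" and \<eta>: "\<And>p q. p tagged_division_of {a..b} \<Longrightarrow> q \<subseteq> p \<Longrightarrow>
      (\<Sum>(x,K)\<in>q. content K) < \<eta> \<Longrightarrow> (\<Sum>(x,K)\<in>q. norm (f (Sup K) - f (Inf K))) < e"
    using ac_on_tagged_division[OF assms(1,3)] by blast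
  obtain \<gamma> where "gauge \<gamma>" and \<gamma>: "\<And>p. p tagged_division_of {a..b} \<Longrightarrow> \<gamma> fine p \<Longrightarrow>
      (\<Sum>(x,K)\<in>p \<inter> N \<times> UNIV. content K) < \<eta>"
    using negligible_tagged_division_small[OF assms(2) \<open>0 < \<eta>\<close>, of a b] by blast
  show thesis
    by (rule that[OF \<open>gauge \<gamma>\<close>]) (use \<eta> \<gamma> in blast)
qed

lemma has_real_derivative_lower_gauge:
  fixes f g :: "real \<Rightarrow> real"
  assumes der: "\<And>t. t \<in> S \<Longrightarrow> \<exists>D. (f has_real_derivative D) (at t) \<and> g t \<le> D" and "0 < e"
  obtains d where "\<And>t. 0 < d t"
    "\<And>t u v. t \<in> S \<Longrightarrow> u \<le> t \<Longrightarrow> t \<le> v \<Longrightarrow> {u..v} \<subseteq> ball t (d t) \<Longrightarrow> (g t - e) * (v - u) \<le> f v - f u"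
proof -
  have "\<forall>t. \<exists>\<delta>>0. t \<in> S \<longrightarrow>
      (\<forall>u v. u \<le> t \<longrightarrow> t \<le> v \<longrightarrow> {u..v} \<subseteq> ball t \<delta> \<longrightarrow> (g t - e) * (v - u) \<le> f v - f u)"
  proof
    fix t
    show "\<exists>\<delta>>0. t \<in> S \<longrightarrow>
        (\<forall>u v. u \<le> t \<longrightarrow> t \<le> v \<longrightarrow> {u..v} \<subseteq> ball t \<delta> \<longrightarrow> (g t - e) * (v - u) \<le> f v - f u)"
    proof (cases "t \<in> S")
      case True
      then obtain D where D: "(f has_real_derivative D) (at t)" "g t \<le> D" using der by blast
      then obtain \<delta> where "0 < \<delta>"
        and \<delta>: "\<And>y. \<bar>y - t\<bar> < \<delta> \<Longrightarrow> \<bar>f y - f t - D * (y - t)\<bar> \<le> e * \<bar>y - t\<bar>"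
        using \<open>0 < e\<close> unfolding has_field_derivative_def has_derivative_at_alt by (metis real_norm_def)
      have "(g t - e) * (v - u) \<le> f v - f u" if "u \<le> t" "t \<le> v" "{u..v} \<subseteq> ball t \<delta>" for u v
      proof -
        have "u \<in> {u..v}" "v \<in> {u..v}" using that(1,2) by auto
        then have "u \<in> ball t \<delta>" "v \<in> ball t \<delta>" using that(3) by blast+
        then have "\<bar>v - t\<bar> < \<delta>" "\<bar>u - t\<bar> < \<delta>" by (auto simp: dist_real_def abs_minus_commute)
        from \<delta>[OF this(1)] \<delta>[OF this(2)] that(1,2)
        have "D * (v - t) - e * (v - t) \<le> f v - f t" "f u - f t \<le> D * (u - t) + e * (t - u)"
          by (auto simp: abs_le_iff)
        moreover have "(g t - e) * (v - u) \<le> (D - e) * (v - u)"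
          using D(2) that(1,2) by (intro mult_right_mono) auto
        ultimately show ?thesis by (simp add: algebra_simps)
      qed
      then show ?thesis using \<open>0 < \<delta>\<close> by blast
    qed (auto intro: exI[of _ 1])
  qed
  then have "\<exists>d. \<forall>t. 0 < d t \<and> (t \<in> S \<longrightarrow>
      (\<forall>u v. u \<le> t \<longrightarrow> t \<le> v \<longrightarrow> {u..v} \<subseteq> ball t (d t) \<longrightarrow> (g t - e) * (v - u) \<le> f v - f u))"
    by (rule choice)
  then obtain d where d: "\<forall>t. 0 < d t \<and> (t \<in> S \<longrightarrow>
      (\<forall>u v. u \<le> t \<longrightarrow> t \<le> v \<longrightarrow> {u..v} \<subseteq> ball t (d t) \<longrightarrow> (g t - e) * (v - u) \<le> f v - f u))"
    by blast
  show thesis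
    using d by (intro that[of d]) auto
qed

lemma has_real_derivative_lower_riemann_sum:
  fixes f g :: "real \<Rightarrow> real"
  assumes "\<And>t. t \<in> {a..b} - N \<Longrightarrow> \<exists>D. (f has_real_derivative D) (at t) \<and> g t \<le> D" and "0 < e"
  obtains \<gamma> where "gauge \<gamma>"
    "\<And>p. p tagged_division_of {a..b} \<Longrightarrow> \<gamma> fine p \<Longrightarrow>
       (\<Sum>(x,K)\<in>p - N \<times> UNIV. (g x - e) * content K) \<le> (\<Sum>(x,K)\<in>p - N \<times> UNIV. f (Sup K) - f (Inf K))"
proof -
  obtain d where "\<And>t. 0 < d t" and d: "\<And>t u v. t \<in> {a..b} - N \<Longrightarrow> u \<le> t \<Longrightarrow> t \<le> v \<Longrightarrow>
      {u..v} \<subseteq> ball t (d t) \<Longrightarrow> (g t - e) * (v - u) \<le> f v - f u"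
    using has_real_derivative_lower_gauge[of "{a..b} - N" f g, OF assms] by blast
  have "gauge (\<lambda>t. ball t (d t))" using \<open>\<And>t. 0 < d t\<close> by (simp add: gauge_def)
  moreover have "(\<Sum>(x,K)\<in>p - N \<times> UNIV. (g x - e) * content K) \<le> (\<Sum>(x,K)\<in>p - N \<times> UNIV. f (Sup K) - f (Inf K))"
    if p: "p tagged_division_of {a..b}" and fine: "(\<lambda>t. ball t (d t)) fine p" for p
  proof (rule sum_mono)
    fix xK assume "xK \<in> p - N \<times> UNIV"
    then obtain x K where xK: "xK = (x, K)" "(x, K) \<in> p" "x \<notin> N" by (cases xK) auto
    then obtain u v where "K = {u..v}" "a \<le> u" "u \<le> x" "x \<le> v" "v \<le> b"
      using tagged_division_of_real_interval[OF p] by metis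
    with d[of x u v] fine xK show "(case xK of (x, K) \<Rightarrow> (g x - e) * content K)
        \<le> (case xK of (x, K) \<Rightarrow> f (Sup K) - f (Inf K))"
      by (auto simp: fine_def)
  qed
  ultimately show thesis by (rule that)
qed

text \<open>A gauge-integral form of the fundamental theorem for absolutely continuous functions whose
  derivative dominates G + k: the excess k only enters through Riemann sums, so it need not be
  measurable or integrable.\<close>

lemma ac_on_increment_ge_riemann_sum:
  fixes f G k :: "real \<Rightarrow> real"
  assumes "a \<le> b" and ac: "ac_on a b f" and G: "(G has_integral I) {a..b}" and N: "negligible N"
    and der: "\<And>t. t \<in> {a..b} - N \<Longrightarrow> \<exists>D. (f has_real_derivative D) (at t) \<and> G t + k t \<le> D"
    and "0 < e"
  obtains \<gamma> where "gauge \<gamma>"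
    "\<And>p. p tagged_division_of {a..b} \<Longrightarrow> \<gamma> fine p \<Longrightarrow>
       I + (\<Sum>(x,K)\<in>p - N \<times> UNIV. content K * k x) \<le> f b - f a + e"
proof -
  define \<epsilon> where "\<epsilon> = e / (b - a + 3)"
  have "0 < \<epsilon>" using \<open>0 < e\<close> \<open>a \<le> b\<close> by (simp add: \<epsilon>_def)
  have slack: "\<epsilon> * (b - a) + 2 * \<epsilon> \<le> e"
  proof -
    have "\<epsilon> * (b - a + 3) = e" using \<open>a \<le> b\<close> by (simp add: \<epsilon>_def)
    then show ?thesis using \<open>0 < \<epsilon>\<close> by (simp add: algebra_simps)
  qed
  obtain \<gamma>1 where "gauge \<gamma>1" and \<gamma>1: "\<And>p. p tagged_division_of {a..b} \<Longrightarrow> \<gamma>1 fine p \<Longrightarrow>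
      \<bar>(\<Sum>(x,K)\<in>p - N \<times> UNIV. content K * G x) - I\<bar> < \<epsilon>"
    using has_integral_riemann_sum_off_negligible[OF G N \<open>0 < \<epsilon>\<close>] by blast
  obtain \<gamma>2 where "gauge \<gamma>2" and \<gamma>2: "\<And>p. p tagged_division_of {a..b} \<Longrightarrow> \<gamma>2 fine p \<Longrightarrow>
      (\<Sum>(x,K)\<in>p \<inter> N \<times> UNIV. norm (f (Sup K) - f (Inf K))) < \<epsilon>"
    using ac_on_negligible_tags_small[OF ac N \<open>0 < \<epsilon>\<close>] by blast
  obtain \<gamma>3 where "gauge \<gamma>3" and \<gamma>3: "\<And>p. p tagged_division_of {a..b} \<Longrightarrow> \<gamma>3 fine p \<Longrightarrow>
      (\<Sum>(x,K)\<in>p - N \<times> UNIV. (G x + k x - \<epsilon>) * content K) \<le> (\<Sum>(x,K)\<in>p - N \<times> UNIV. f (Sup K) - f (Inf K))"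
    using has_real_derivative_lower_riemann_sum[of a b N f "\<lambda>t. G t + k t", OF der \<open>0 < \<epsilon>\<close>] by blast
  have "gauge (\<lambda>t. \<gamma>1 t \<inter> \<gamma>2 t \<inter> \<gamma>3 t)"
    using \<open>gauge \<gamma>1\<close> \<open>gauge \<gamma>2\<close> \<open>gauge \<gamma>3\<close> by (intro gauge_Int)
  moreover have "I + (\<Sum>(x,K)\<in>p - N \<times> UNIV. content K * k x) \<le> f b - f a + e"
    if p: "p tagged_division_of {a..b}" and "(\<lambda>t. \<gamma>1 t \<inter> \<gamma>2 t \<inter> \<gamma>3 t) fine p" for p
  proof -
    have fine: "\<gamma>1 fine p" "\<gamma>2 fine p" "\<gamma>3 fine p" using \<open>_ fine p\<close> by (auto simp: fine_Int)
    have "finite p" using p by blast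
    let ?incr = "\<lambda>(x::real, K). f (Sup K) - f (Inf K)"
    have "f b - f a = sum ?incr (p \<inter> N \<times> UNIV) + sum ?incr (p - N \<times> UNIV)"
      using additive_tagged_division_1[OF \<open>a \<le> b\<close> p, of f] sum.Int_Diff[OF \<open>finite p\<close>, of ?incr "N \<times> UNIV"]
      by simp
    moreover have "- \<epsilon> \<le> sum ?incr (p \<inter> N \<times> UNIV)"
    proof -
      have "- (\<Sum>(x,K)\<in>p \<inter> N \<times> UNIV. norm (f (Sup K) - f (Inf K))) \<le> sum ?incr (p \<inter> N \<times> UNIV)"
        unfolding sum_negf[symmetric] by (intro sum_mono) auto
      then show ?thesis using \<gamma>2[OF p fine(2)] by linarith
    qed
    moreover have "(\<Sum>(x,K)\<in>p - N \<times> UNIV. (G x + k x - \<epsilon>) * content K)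
        = (\<Sum>(x,K)\<in>p - N \<times> UNIV. content K * G x) + (\<Sum>(x,K)\<in>p - N \<times> UNIV. content K * k x)
          - \<epsilon> * (\<Sum>(x,K)\<in>p - N \<times> UNIV. content K)"
      by (simp add: algebra_simps sum.distrib sum_subtractf sum_distrib_left case_prod_beta)
    moreover have "\<epsilon> * (\<Sum>(x,K)\<in>p - N \<times> UNIV. content K) \<le> \<epsilon> * (b - a)"
    proof (rule mult_left_mono)
      have "(\<Sum>(x,K)\<in>p - N \<times> UNIV. content K) \<le> (\<Sum>(x,K)\<in>p. content K)"
        using \<open>finite p\<close> by (intro sum_mono2) auto
      also have "\<dots> = b - a"
        using additive_content_tagged_division[of p a b] p \<open>a \<le> b\<close> by simp
      finally show "(\<Sum>(x,K)\<in>p - N \<times> UNIV. content K) \<le> b - a" .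
    qed (use \<open>0 < \<epsilon>\<close> in simp)
    ultimately show ?thesis
      using \<gamma>1[OF p fine(1)] \<gamma>3[OF p fine(3)] slack unfolding abs_less_iff by linarith
  qed
  ultimately show thesis by (rule that)
qed

lemma ac_on_increment_ge_integral:
  fixes f G k :: "real \<Rightarrow> real"
  assumes "a \<le> b" "ac_on a b f" "(G has_integral I) {a..b}" "negligible N"
    and "\<And>t. t \<in> {a..b} - N \<Longrightarrow> \<exists>D. (f has_real_derivative D) (at t) \<and> G t + k t \<le> D"
    and k: "\<And>t. t \<in> {a..b} \<Longrightarrow> 0 \<le> k t"
  shows "I \<le> f b - f a"
proof (rule field_le_epsilon)
  fix e :: real assume "0 < e"
  obtain \<gamma> where "gauge \<gamma>" and \<gamma>: "\<And>p. p tagged_division_of {a..b} \<Longrightarrow> \<gamma> fine p \<Longrightarrow>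
      I + (\<Sum>(x,K)\<in>p - N \<times> UNIV. content K * k x) \<le> f b - f a + e"
    using ac_on_increment_ge_riemann_sum[OF assms(1-5) \<open>0 < e\<close>] by blast
  obtain p where p: "p tagged_division_of {a..b}" "\<gamma> fine p"
    using fine_division_exists_real[OF \<open>gauge \<gamma>\<close>] by blast
  have "0 \<le> (\<Sum>(x,K)\<in>p - N \<times> UNIV. content K * k x)"
    using k tag_in_interval[OF p(1)] by (intro sum_nonneg) fastforce
  then show "I \<le> f b - f a + e" using \<gamma>[OF p] by linarith
qed

lemma ac_on_increment_le_integral_imp_negligible_superlevel:
  fixes f G k :: "real \<Rightarrow> real"
  assumes "a \<le> b" "ac_on a b f" "(G has_integral I) {a..b}" "negligible N"
    and "\<And>t. t \<in> {a..b} - N \<Longrightarrow> \<exists>D. (f has_real_derivative D) (at t) \<and> G t + k t \<le> D"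
    and k: "\<And>t. t \<in> {a..b} \<Longrightarrow> 0 \<le> k t"
    and tight: "f b - f a \<le> I" and "0 < c"
  shows "negligible {t \<in> {a..b} - N. c \<le> k t}"
proof -
  define S where "S = {t \<in> {a..b} - N. c \<le> k t}"
  have "(indicator S has_integral (0::real)) {a..b}"
    unfolding has_integral_real
  proof (intro allI impI)
    fix e :: real assume "0 < e"
    then obtain \<gamma> where "gauge \<gamma>" and \<gamma>: "\<And>p. p tagged_division_of {a..b} \<Longrightarrow> \<gamma> fine p \<Longrightarrow>
        I + (\<Sum>(x,K)\<in>p - N \<times> UNIV. content K * k x) \<le> f b - f a + c * e / 2"
      using ac_on_increment_ge_riemann_sum[OF assms(1-5), of "c * e / 2"] \<open>0 < c\<close> by auto
    have "norm ((\<Sum>(x,K)\<in>p. content K *\<^sub>R (indicator S x :: real)) - 0) < e"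
      if p: "p tagged_division_of {a..b}" "\<gamma> fine p" for p
    proof -
      have "finite p" using p by blast
      have off_N: "(\<Sum>(x,K)\<in>p. content K *\<^sub>R (indicator S x :: real))
          = (\<Sum>(x,K)\<in>p - N \<times> UNIV. content K *\<^sub>R (indicator S x :: real))"
        by (rule sum_tags_off_null[OF \<open>finite p\<close>]) (simp add: S_def)
      have "c * (\<Sum>(x,K)\<in>p - N \<times> UNIV. content K *\<^sub>R (indicator S x :: real))
          \<le> (\<Sum>(x,K)\<in>p - N \<times> UNIV. content K * k x)"
        unfolding sum_distrib_left
      proof (rule sum_mono)
        fix xK assume "xK \<in> p - N \<times> UNIV"
        then obtain x K where xK: "xK = (x, K)" "(x, K) \<in> p" by (cases xK) auto
        then have "0 \<le> k x" using k tag_in_interval[OF p(1)] by blast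
        have "c * content K \<le> k x * content K" if "c \<le> k x"
          using that by (rule mult_right_mono) simp
        with \<open>0 \<le> k x\<close> xK
        show "c * (case xK of (x, K) \<Rightarrow> content K *\<^sub>R (indicator S x :: real))
            \<le> (case xK of (x, K) \<Rightarrow> content K * k x)"
          by (auto simp: indicator_def S_def mult.commute)
      qed
      also have "\<dots> \<le> c * e / 2" using \<gamma>[OF p] tight by linarith
      finally have "(\<Sum>(x,K)\<in>p. content K *\<^sub>R (indicator S x :: real)) \<le> e / 2"
        using \<open>0 < c\<close> off_N by (simp add: mult.assoc)
      moreover have "0 \<le> (\<Sum>(x,K)\<in>p. content K *\<^sub>R (indicator S x :: real))"
        by (intro sum_nonneg) auto
      ultimately show ?thesis using \<open>0 < e\<close> by simp
    qed
    then show "\<exists>\<gamma>. gauge \<gamma> \<and> (\<forall>p. p tagged_division_of {a..b} \<and> \<gamma> fine p \<longrightarrow>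
        norm ((\<Sum>(x,K)\<in>p. content K *\<^sub>R (indicator S x :: real)) - 0) < e)"
      using \<open>gauge \<gamma>\<close> by blast
  qed
  then have "(indicator S has_integral (0::real)) UNIV"
    by (rule has_integral_on_superset) (auto simp: S_def indicator_def)
  then show ?thesis unfolding S_def negligible_UNIV by blast
qed

lemma ac_on_increment_le_integral_imp_negligible:
  fixes f G k :: "real \<Rightarrow> real"
  assumes "a \<le> b" "ac_on a b f" "(G has_integral I) {a..b}" "negligible N"
    and "\<And>t. t \<in> {a..b} - N \<Longrightarrow> \<exists>D. (f has_real_derivative D) (at t) \<and> G t + k t \<le> D"
    and k: "\<And>t. t \<in> {a..b} \<Longrightarrow> 0 \<le> k t"
    and tight: "f b - f a \<le> I"
  shows "negligible {t \<in> {a..b}. 0 < k t}"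
proof -
  have "{t \<in> {a..b}. 0 < k t} \<subseteq> N \<union> (\<Union>n. {t \<in> {a..b} - N. 1 / Suc n \<le> k t})"
  proof
    fix t assume t: "t \<in> {t \<in> {a..b}. 0 < k t}"
    then obtain n where "1 / Suc n < k t" using reals_Archimedean by (auto simp: inverse_eq_divide)
    with t show "t \<in> N \<union> (\<Union>n. {t \<in> {a..b} - N. 1 / Suc n \<le> k t})" by (auto intro!: less_imp_le)
  qed
  moreover have "negligible (N \<union> (\<Union>n. {t \<in> {a..b} - N. 1 / Suc n \<le> k t}))"
    using ac_on_increment_le_integral_imp_negligible_superlevel[OF assms] \<open>negligible N\<close>
    by (intro negligible_Un negligible_Union_nat) auto
  ultimately show ?thesis using negligible_subset by blast
qed

lemma bv_on_bounded:
  assumes "bv_on a b f" "a \<le> b"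
  obtains C where "\<And>t. t \<in> {a..b} \<Longrightarrow> \<bar>f t\<bar> \<le> C"
proof -
  obtain C where C: "\<forall>(n::nat) (s::nat \<Rightarrow> real). (\<forall>i\<le>n. a \<le> s i \<and> s i \<le> b) \<and> (\<forall>i<n. s i \<le> s (Suc i))
      \<longrightarrow> (\<Sum>i<n. \<bar>f (s (Suc i)) - f (s i)\<bar>) \<le> C"
    using assms(1) unfolding bv_on_def by blast
  have "\<bar>f t\<bar> \<le> \<bar>f a\<bar> + C" if "t \<in> {a..b}" for t
  proof -
    have "\<bar>f t - f a\<bar> \<le> C"
      using C[rule_format, of 1 "\<lambda>i. if i = 0 then a else t"] that assms(2) by auto
    then show ?thesis by linarith
  qed
  then show thesis by (rule that)
qed

lemma AE_lborel_negligible_exception: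
  fixes Q :: "'a::euclidean_space \<Rightarrow> bool"
  assumes "AE t in lborel. Q t"
  obtains N where "negligible N" "\<And>t. t \<notin> N \<Longrightarrow> Q t"
proof -
  have "AE t in lebesgue. Q t" using AE_completion[OF assms] .
  then obtain N where "negligible N" "{t. \<not> Q t} \<subseteq> N"
    unfolding eventually_ae_filter_negligible by blast
  then show thesis using that by blast
qed

lemma AE_lborel_not_in_negligible:
  fixes N :: "'a::euclidean_space set"
  assumes "negligible N"
  shows "AE t in lborel. t \<notin> N"
proof -
  have "AE t in lebesgue. t \<notin> N"
    using assms unfolding eventually_ae_filter_negligible by blast
  then show ?thesis by (simp only: AE_completion_iff)
qed

section \<open>The Fenchel--Young inequality\<close>

lemma bdd_above_blinfun_minus_superlinear:
  fixes \<psi> :: "'x::real_normed_vector \<Rightarrow> real"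
  assumes "superlinear \<psi>" and nonneg: "\<And>v. 0 \<le> \<psi> v"
  shows "bdd_above (range (\<lambda>v. blinfun_apply \<phi> v - \<psi> v))"
proof -
  obtain R where R: "\<And>v. R \<le> norm v \<Longrightarrow> (norm \<phi> + 1) * norm v \<le> \<psi> v"
    using assms(1) unfolding superlinear_def by blast
  show ?thesis
  proof (rule bdd_aboveI2)
    fix v
    have "blinfun_apply \<phi> v \<le> norm \<phi> * norm v"
      using norm_blinfun[of \<phi> v] by simp
    moreover have "norm \<phi> * norm v \<le> \<psi> v + norm \<phi> * \<bar>R\<bar>"
    proof (cases "R \<le> norm v")
      case True
      have "(norm \<phi> + 1) * norm v = norm \<phi> * norm v + norm v" by (simp add: algebra_simps)
      moreover have "0 \<le> norm \<phi> * \<bar>R\<bar>" by simp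
      ultimately show ?thesis using R[OF True] norm_ge_zero[of v] by linarith
    next
      case False
      then have "norm \<phi> * norm v \<le> norm \<phi> * \<bar>R\<bar>" by (intro mult_left_mono) auto
      then show ?thesis using nonneg[of v] by linarith
    qed
    ultimately show "blinfun_apply \<phi> v - \<psi> v \<le> norm \<phi> * \<bar>R\<bar>" by linarith
  qed
qed

lemma fenchel_young:
  fixes \<psi> :: "'x::real_normed_vector \<Rightarrow> real"
  assumes "superlinear \<psi>" "\<And>v. 0 \<le> \<psi> v"
  shows "blinfun_apply (dual \<xi>) v - \<psi> v \<le> fconj dual \<psi> \<xi>"
  unfolding fconj_def by (rule cSUP_upper[OF UNIV_I bdd_above_blinfun_minus_superlinear[OF assms]])

lemma subdiff_if_fenchel_young_eq:
  fixes \<psi> :: "'x::real_normed_vector \<Rightarrow> real"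
  assumes "superlinear \<psi>" "\<And>v. 0 \<le> \<psi> v"
    and eq: "\<psi> v + fconj dual \<psi> \<xi> \<le> blinfun_apply (dual \<xi>) v"
  shows "\<xi> \<in> subdiff dual \<psi> v"
  unfolding subdiff_def
proof (intro CollectI allI)
  fix w
  have "blinfun_apply (dual \<xi>) w - \<psi> w \<le> fconj dual \<psi> \<xi>"
    by (rule fenchel_young[OF assms(1,2)])
  with eq show "\<psi> v + blinfun_apply (dual \<xi>) (w - v) \<le> \<psi> w"
    by (simp add: blinfun.diff_right)
qed

section \<open>Energy along an EDI solution\<close>

text \<open>The locale fixes the witnesses Pd, Es, Xi of an EDI solution.\<close>

locale EDI_trajectory =
  fixes T :: real
    and dual :: "'d::{banach,second_countable_topology} \<Rightarrow> ('x::{banach,second_countable_topology} \<Rightarrow>\<^sub>L real)"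
    and D :: "'x set"
    and E :: "real \<Rightarrow> 'x \<Rightarrow> ereal"
    and Psi :: "'x \<Rightarrow> 'x \<Rightarrow> real"
    and F :: "real \<Rightarrow> 'x \<Rightarrow> 'd set"
    and Pw :: "real \<Rightarrow> 'x \<Rightarrow> 'd \<Rightarrow> real"
    and P Pd :: "real \<Rightarrow> 'x"
    and Es :: "real \<Rightarrow> real"
    and Xi :: "real \<Rightarrow> 'd"
  assumes system: "gen_gradient_system T dual D E Psi F Pw"
    and chain_rule: "chain_rule_ineq T dual E Psi F Pw"
    and ac_P: "ac_on 0 T P"
    and deriv_P: "is_deriv_ae T P Pd"
    and bv_Es: "bv_on 0 T Es"
    and E_le_Es: "\<forall>t\<in>{0..T}. ereal (Es t) \<ge> E t (P t)"
    and E_0: "ereal (Es 0) = E 0 (P 0)"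
    and int_Xi: "set_integrable lborel {0..T} Xi"
    and Xi_in_F: "AE t in lborel. t \<in> {0<..<T} \<longrightarrow> Xi t \<in> F t (P t)"
    and int_Psi: "set_integrable lborel {0..T} (\<lambda>r. Psi (P r) (Pd r))"
    and int_conj: "set_integrable lborel {0..T} (\<lambda>r. fconj dual (Psi (P r)) (- Xi r))"
    and int_Pw: "set_integrable lborel {0..T} (\<lambda>r. Pw r (P r) (Xi r))"
    and EDI: "\<forall>s t. 0 \<le> s \<and> s \<le> t \<and> t \<le> T \<longrightarrow>
      Es t + (LINT r:{s..t}|lborel. Psi (P r) (Pd r) + fconj dual (Psi (P r)) (- Xi r))
      \<le> Es s + (LINT r:{s..t}|lborel. Pw r (P r) (Xi r))"
begin

lemma T_pos: "0 < T"
  using system unfolding gen_gradient_system_def by blast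

lemma dual_uminus: "dual (- \<xi>) = - dual \<xi>"
  using system unfolding gen_gradient_system_def dual_pairing_def by (auto simp: linear_simps)

lemma E_lower_bound:
  obtains c where "\<And>t x. t \<in> {0..T} \<Longrightarrow> ereal c \<le> E t x"
proof -
  obtain c where "\<forall>t\<in>{0..T}. \<forall>x. E t x \<ge> ereal c"
    using system unfolding gen_gradient_system_def by blast
  then show thesis using that by blast
qed

lemma P_in_D: "t \<in> {0..T} \<Longrightarrow> P t \<in> D"
proof -
  assume t: "t \<in> {0..T}"
  have "E t (P t) \<le> ereal (Es t)" using E_le_Es t by blast
  then have "E t (P t) < \<infinity>" by (rule le_less_trans) simp
  moreover have "\<forall>t\<in>{0..T}. {x. E t x < \<infinity>} = D"
    using system unfolding gen_gradient_system_def by (elim conjE)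
  ultimately show "P t \<in> D" using t by blast
qed

lemma superlinear_Psi: "t \<in> {0..T} \<Longrightarrow> superlinear (Psi (P t))"
  and Psi_nonneg: "t \<in> {0..T} \<Longrightarrow> 0 \<le> Psi (P t) v"
  using P_in_D system unfolding gen_gradient_system_def by blast+

definition energy :: "real \<Rightarrow> real" where
  "energy t = real_of_ereal (E t (P t))"

lemma E_eq_energy: "t \<in> {0..T} \<Longrightarrow> E t (P t) = ereal (energy t)"
proof -
  assume t: "t \<in> {0..T}"
  obtain c where "ereal c \<le> E t (P t)" using E_lower_bound t by metis
  moreover have "E t (P t) \<le> ereal (Es t)" using E_le_Es t by blast
  ultimately show ?thesis unfolding energy_def by (cases "E t (P t)") auto
qed

lemma energy_le_Es: "t \<in> {0..T} \<Longrightarrow> energy t \<le> Es t"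
  using E_eq_energy E_le_Es by fastforce

lemma energy_0: "energy 0 = Es 0"
  using E_eq_energy[of 0] E_0 T_pos by simp

lemma energy_bounded: "\<exists>C. \<forall>t\<in>{0<..<T}. \<bar>E t (P t)\<bar> \<le> ereal C"
proof -
  obtain c where c: "\<And>t x. t \<in> {0..T} \<Longrightarrow> ereal c \<le> E t x" using E_lower_bound by blast
  obtain C where C: "\<And>t. t \<in> {0..T} \<Longrightarrow> \<bar>Es t\<bar> \<le> C"
    using bv_on_bounded[OF bv_Es] T_pos by (metis less_imp_le)
  have "\<bar>energy t\<bar> \<le> \<bar>c\<bar> + C" if "t \<in> {0..T}" for t
    using c[OF that, of "P t"] C[OF that] energy_le_Es[OF that] E_eq_energy[OF that] by auto
  then show ?thesis using E_eq_energy by (intro exI[of _ "\<bar>c\<bar> + C"]) auto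
qed

lemma energy_chain_rule:
  "ac_on 0 T energy \<and> (AE t in lborel. t \<in> {0<..<T} \<longrightarrow>
     (\<exists>D. (energy has_real_derivative D) (at t) \<and> blinfun_apply (dual (Xi t)) (Pd t) + Pw t (P t) (Xi t) \<le> D))"
proof -
  have "ac_on 0 T P \<and> is_deriv_ae T P Pd \<and> set_integrable lborel {0..T} Xi
      \<and> (\<exists>C. \<forall>t\<in>{0<..<T}. \<bar>E t (P t)\<bar> \<le> ereal C)
      \<and> (AE t in lborel. t \<in> {0<..<T} \<longrightarrow> Xi t \<in> F t (P t))
      \<and> set_integrable lborel {0..T} (\<lambda>t. Psi (P t) (Pd t))
      \<and> set_integrable lborel {0..T} (\<lambda>t. fconj dual (Psi (P t)) (- Xi t))"
    using ac_P deriv_P int_Xi energy_bounded Xi_in_F int_Psi int_conj by (intro conjI)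
  from chain_rule[unfolded chain_rule_ineq_def, rule_format, OF this]
  show ?thesis unfolding energy_def[abs_def] by blast
qed

definition dissipation :: "real \<Rightarrow> real" where
  "dissipation r = Psi (P r) (Pd r) + fconj dual (Psi (P r)) (- Xi r)"

definition net_power :: "real \<Rightarrow> real" where
  "net_power r = Pw r (P r) (Xi r) - dissipation r"

definition fenchel_gap :: "real \<Rightarrow> real" where
  "fenchel_gap r = dissipation r + blinfun_apply (dual (Xi r)) (Pd r)"

lemma fenchel_gap_nonneg: "t \<in> {0..T} \<Longrightarrow> 0 \<le> fenchel_gap t"
proof -
  assume t: "t \<in> {0..T}"
  have "blinfun_apply (dual (- Xi t)) (Pd t) - Psi (P t) (Pd t) \<le> fconj dual (Psi (P t)) (- Xi t)"
    using fenchel_young[OF superlinear_Psi[OF t] Psi_nonneg[OF t]] .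
  then show ?thesis by (simp add: fenchel_gap_def dissipation_def dual_uminus uminus_blinfun.rep_eq)
qed

lemma energy_derivative_bound:
  obtains N where "negligible N"
    "\<And>t. t \<in> {0..T} - N \<Longrightarrow> \<exists>D. (energy has_real_derivative D) (at t) \<and> net_power t + fenchel_gap t \<le> D"
proof -
  obtain N0 where "negligible N0" and N0: "\<And>t. t \<notin> N0 \<Longrightarrow> t \<in> {0<..<T} \<longrightarrow>
      (\<exists>D. (energy has_real_derivative D) (at t) \<and> blinfun_apply (dual (Xi t)) (Pd t) + Pw t (P t) (Xi t) \<le> D)"
    using AE_lborel_negligible_exception[OF energy_chain_rule[THEN conjunct2]] by blast
  show thesis
  proof (rule that[of "N0 \<union> {0, T}"])
    show "negligible (N0 \<union> {0, T})" using \<open>negligible N0\<close> by simp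
    fix t assume "t \<in> {0..T} - (N0 \<union> {0, T})"
    then have "t \<in> {0<..<T}" "t \<notin> N0" by auto
    moreover have "net_power t + fenchel_gap t = blinfun_apply (dual (Xi t)) (Pd t) + Pw t (P t) (Xi t)"
      by (simp add: net_power_def fenchel_gap_def)
    ultimately show "\<exists>D. (energy has_real_derivative D) (at t) \<and> net_power t + fenchel_gap t \<le> D"
      using N0 by simp
  qed
qed

lemma net_power_has_integral:
  assumes "0 \<le> s" "t \<le> T"
  shows "(net_power has_integral
           (LINT r:{s..t}|lborel. Pw r (P r) (Xi r)) - (LINT r:{s..t}|lborel. dissipation r)) {s..t}"
proof -
  have sub: "{s..t} \<subseteq> {0..T}" using assms by auto
  have Pw: "set_integrable lborel {s..t} (\<lambda>r. Pw r (P r) (Xi r))"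
    using set_integrable_subset[OF int_Pw _ sub] by simp
  have "set_integrable lborel {s..t} dissipation"
    unfolding dissipation_def
    using set_integrable_subset[OF int_Psi _ sub] set_integrable_subset[OF int_conj _ sub]
    by (intro set_integral_add(1)) simp_all
  then have "set_integrable lborel {s..t} net_power"
    and "(LINT r:{s..t}|lborel. net_power r)
          = (LINT r:{s..t}|lborel. Pw r (P r) (Xi r)) - (LINT r:{s..t}|lborel. dissipation r)"
    using set_integral_diff[OF Pw] unfolding net_power_def by simp_all
  then show ?thesis
    using set_borel_integral_eq_integral[of "{s..t}" net_power] by (simp add: has_integral_integral)
qed

lemma energy_increment_le: "t \<in> {0..T} \<Longrightarrow> energy t - energy 0 \<le> integral {0..t} net_power"
proof -
  assume t: "t \<in> {0..T}"
  then have "Es t + (LINT r:{0..t}|lborel. dissipation r) \<le> Es 0 + (LINT r:{0..t}|lborel. Pw r (P r) (Xi r))"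
    using EDI unfolding dissipation_def by auto
  moreover have "integral {0..t} net_power
      = (LINT r:{0..t}|lborel. Pw r (P r) (Xi r)) - (LINT r:{0..t}|lborel. dissipation r)"
    using net_power_has_integral[of 0 t] t by (simp add: integral_unique)
  ultimately show ?thesis using energy_le_Es[OF t] energy_0 by linarith
qed

lemma energy_increment_ge:
  assumes "0 \<le> s" "s \<le> t" "t \<le> T"
  shows "integral {s..t} net_power \<le> energy t - energy s"
proof -
  obtain N where "negligible N" and N: "\<And>r. r \<in> {0..T} - N \<Longrightarrow>
      \<exists>D. (energy has_real_derivative D) (at r) \<and> net_power r + fenchel_gap r \<le> D"
    using energy_derivative_bound by blast
  show ?thesis
  proof (rule ac_on_increment_ge_integral[where f = energy and G = net_power and N = N and k = fenchel_gap])
    show "ac_on s t energy" using ac_on_subinterval energy_chain_rule assms by blast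
    show "(net_power has_integral integral {s..t} net_power) {s..t}"
      using net_power_has_integral assms by blast
    show "\<exists>D. (energy has_real_derivative D) (at r) \<and> net_power r + fenchel_gap r \<le> D"
      if "r \<in> {s..t} - N" for r using N that assms by auto
    show "0 \<le> fenchel_gap r" if "r \<in> {s..t}" for r using fenchel_gap_nonneg that assms by auto
  qed fact+
qed

lemma energy_balance:
  assumes "0 \<le> s" "s \<le> t" "t \<le> T"
  shows "energy t - energy s = integral {s..t} net_power"
proof -
  have from_0: "energy r - energy 0 = integral {0..r} net_power" if "r \<in> {0..T}" for r
    using energy_increment_le[OF that] energy_increment_ge[of 0 r] that by fastforce
  have "net_power integrable_on {0..t}" using net_power_has_integral[of 0 t] assms by blast
  then have "integral {0..s} net_power + integral {s..t} net_power = integral {0..t} net_power"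
    using assms by (intro Henstock_Kurzweil_Integration.integral_combine) auto
  then show ?thesis using from_0[of s] from_0[of t] assms by simp
qed

lemma fenchel_gap_AE_zero: "AE t in lborel. t \<in> {0<..<T} \<longrightarrow> fenchel_gap t = 0"
proof -
  obtain N where "negligible N" and N: "\<And>r. r \<in> {0..T} - N \<Longrightarrow>
      \<exists>D. (energy has_real_derivative D) (at r) \<and> net_power r + fenchel_gap r \<le> D"
    using energy_derivative_bound by blast
  have "negligible {t \<in> {0..T}. 0 < fenchel_gap t}"
  proof (rule ac_on_increment_le_integral_imp_negligible[where f = energy and G = net_power and N = N])
    show "(net_power has_integral integral {0..T} net_power) {0..T}"
      using net_power_has_integral[of 0 T] by blast
    show "energy T - energy 0 \<le> integral {0..T} net_power"
      using energy_balance[of 0 T] T_pos by simp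
  qed (use T_pos energy_chain_rule \<open>negligible N\<close> N fenchel_gap_nonneg in auto)
  from AE_lborel_not_in_negligible[OF this]
  show ?thesis
  proof eventually_elim
    case (elim t)
    show ?case
    proof
      assume "t \<in> {0<..<T}"
      then have "t \<in> {0..T}" by auto
      with elim fenchel_gap_nonneg[OF this] show "fenchel_gap t = 0" by fastforce
    qed
  qed
qed

lemma EDB_solution: "EDB_solution T dual E Psi F Pw P"
  unfolding EDB_solution_def
proof (intro conjI exI[of _ Pd] exI[of _ Xi] ac_P deriv_P int_Xi int_Psi int_conj int_Pw allI impI)
  show "AE t in lborel. t \<in> {0<..<T} \<longrightarrow>
      Xi t \<in> F t (P t) \<and> 0 \<in> (\<lambda>\<eta>. \<eta> + Xi t) ` subdiff dual (Psi (P t)) (Pd t)"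
    using Xi_in_F fenchel_gap_AE_zero
  proof eventually_elim
    case (elim t)
    show ?case
    proof
      assume t: "t \<in> {0<..<T}"
      then have "t \<in> {0..T}" by auto
      have "Psi (P t) (Pd t) + fconj dual (Psi (P t)) (- Xi t) \<le> blinfun_apply (dual (- Xi t)) (Pd t)"
        using elim(2) t by (simp add: fenchel_gap_def dissipation_def dual_uminus uminus_blinfun.rep_eq)
      then have "- Xi t \<in> subdiff dual (Psi (P t)) (Pd t)"
        by (rule subdiff_if_fenchel_young_eq[OF superlinear_Psi Psi_nonneg, OF \<open>t \<in> {0..T}\<close> \<open>t \<in> {0..T}\<close>])
      then have "0 \<in> (\<lambda>\<eta>. \<eta> + Xi t) ` subdiff dual (Psi (P t)) (Pd t)"
        by (rule rev_image_eqI) simp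
      with elim(1) t show "Xi t \<in> F t (P t) \<and> 0 \<in> (\<lambda>\<eta>. \<eta> + Xi t) ` subdiff dual (Psi (P t)) (Pd t)"
        by blast
    qed
  qed
next
  fix s t :: real assume st: "0 \<le> s \<and> s \<le> t \<and> t \<le> T"
  then have "energy t - energy s
      = (LINT r:{s..t}|lborel. Pw r (P r) (Xi r)) - (LINT r:{s..t}|lborel. dissipation r)"
    using energy_balance net_power_has_integral by (simp add: integral_unique)
  with st show "E t (P t) + ereal (LINT r:{s..t}|lborel. Psi (P r) (Pd r) + fconj dual (Psi (P r)) (- Xi r))
      = E s (P s) + ereal (LINT r:{s..t}|lborel. Pw r (P r) (Xi r))"
    by (simp add: E_eq_energy dissipation_def)
qed

end

theorem proposition2p6:
  fixes T :: real
    and dual :: "'d::{banach,second_countable_topology} \<Rightarrow> ('x::{banach,second_countable_topology} \<Rightarrow>\<^sub>L real)"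
    and D :: "'x set"
    and E :: "real \<Rightarrow> 'x \<Rightarrow> ereal"
    and Psi :: "'x \<Rightarrow> 'x \<Rightarrow> real"
    and F :: "real \<Rightarrow> 'x \<Rightarrow> 'd set"
    and Pw :: "real \<Rightarrow> 'x \<Rightarrow> 'd \<Rightarrow> real"
    and P :: "real \<Rightarrow> 'x"
  assumes "gen_gradient_system T dual D E Psi F Pw"
    and "chain_rule_ineq T dual E Psi F Pw"
    and "EDI_solution T dual E Psi F Pw P"
  shows "EDB_solution T dual E Psi F Pw P"
proof -
  obtain Pd Es Xi where "EDI_trajectory T dual D E Psi F Pw P Pd Es Xi"
    using assms unfolding EDI_solution_def EDI_trajectory_def by blast
  then show ?thesis by (rule EDI_trajectory.EDB_solution)
qed

end
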